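(* Let $p$ be an odd prime, $D=\mathbb{Z}_{(p)}$, and $A=D\oplus D\mathbf{i}\oplus D\mathbf{j}\oplus D\mathbf{k}$ with $\mathbf{i}^2=\mathbf{j}^2=-1$, $\mathbf{i}\mathbf{j}=\mathbf{k}=-\mathbf{j}\mathbf{i}$. Then $\textnormal{Int}_{\mathbb{Q}}(A)=\textnormal{Int}_{\mathbb{Q}}(M_2(D))$, but $A\not\cong M_2(D)$.
   Context: $\textnormal{Int}_{\mathbb{Q}}(A)=\{f\in\mathbb{Q}[X]\mid f(A)\subseteq A\}$ with evaluation in $\mathbb{Q}\otimes_D A$; similarly for $M_2(D)$, the $2\times 2$ matrices over $D$. *)

theory Defs
  imports "HOL-Analysis.Analysis" "HOL-Computational_Algebra.Polynomial"
begin

definition Zloc :: "nat \<Rightarrow> rat set" where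
  "Zloc p = {q. \<exists>a b :: int. b \<noteq> 0 \<and> \<not> int p dvd b \<and> q = of_int a / of_int b}"

text \<open>Rational Hamilton quaternions Q (x) A, coordinates w.r.t. 1, i, j, k.\<close>
datatype quat = Quat rat rat rat rat

fun qadd :: "quat \<Rightarrow> quat \<Rightarrow> quat" where
  "qadd (Quat a1 b1 c1 d1) (Quat a2 b2 c2 d2) = Quat (a1 + a2) (b1 + b2) (c1 + c2) (d1 + d2)"

fun qmul :: "quat \<Rightarrow> quat \<Rightarrow> quat" where
  "qmul (Quat a1 b1 c1 d1) (Quat a2 b2 c2 d2) =
     Quat (a1*a2 - b1*b2 - c1*c2 - d1*d2)
          (a1*b2 + b1*a2 + c1*d2 - d1*c2)
          (a1*c2 - b1*d2 + c1*a2 + d1*b2)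
          (a1*d2 + b1*c2 - c1*b2 + d1*a2)"

definition qone :: quat where "qone = Quat 1 0 0 0"

definition qscal :: "rat \<Rightarrow> quat" where "qscal c = Quat c 0 0 0"

definition qeval :: "rat poly \<Rightarrow> quat \<Rightarrow> quat" where
  "qeval f x = foldr (\<lambda>c acc. qadd (qscal c) (qmul acc x)) (coeffs f) (Quat 0 0 0 0)"

definition quat_order :: "nat \<Rightarrow> quat set" where
  "quat_order p = {Quat a b c d | a b c d. a \<in> Zloc p \<and> b \<in> Zloc p \<and> c \<in> Zloc p \<and> d \<in> Zloc p}"

definition IntQ_quat :: "nat \<Rightarrow> rat poly set" where
  "IntQ_quat p = {f. \<forall>x \<in> quat_order p. qeval f x \<in> quat_order p}"

definition meval :: "rat poly \<Rightarrow> rat^2^2 \<Rightarrow> rat^2^2" where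
  "meval f M = foldr (\<lambda>c acc. mat c + acc ** M) (coeffs f) (mat 0)"

definition M2 :: "nat \<Rightarrow> (rat^2^2) set" where
  "M2 p = {M. \<forall>i j. M $ i $ j \<in> Zloc p}"

definition IntQ_M2 :: "nat \<Rightarrow> rat poly set" where
  "IntQ_M2 p = {f. \<forall>M \<in> M2 p. meval f M \<in> M2 p}"

end

theory Submission
  imports Defs
begin

text \<open>Every element of \<open>A\<close> or of \<open>M\<^sub>2(D)\<close> has the form \<open>a + u\<close> with \<open>a \<in> D\<close> and \<open>u\<close> traceless,
  so that \<open>u\<^sup>2 = -s\<close> for a scalar \<open>s \<in> D\<close> (using \<open>1/2 \<in> D\<close> for matrices). Hence
  \<open>f(a + u) = F + S u\<close>, where \<open>(F, S)\<close> depends only on \<open>f\<close>, \<open>a\<close> and \<open>s\<close>. For \<open>M\<^sub>2(D)\<close> every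
  \<open>s \<in> D\<close> occurs with a primitive \<open>u\<close>, so \<open>f\<close> is integer-valued iff \<open>F, S \<in> D\<close> for all \<open>a, s\<close>.
  For \<open>A\<close> only sums of three squares \<open>s = b\<^sup>2 + c\<^sup>2 + d\<^sup>2\<close> occur, but by Hensel's lemma these
  approximate every \<open>s \<in> D\<close> \<open>p\<close>-adically with \<open>b\<close> a unit, and \<open>(F, S)\<close> varies \<open>p\<close>-adically
  continuously in \<open>s\<close> since the denominators of \<open>f\<close> are bounded. The two rings are not
  isomorphic because \<open>M\<^sub>2(D)\<close> has zero divisors and \<open>A\<close>, having a multiplicative anisotropic
  norm, has none.\<close>

locale prime_localization =
  fixes p :: nat
  assumes prime_p: "prime p"
begin

abbreviation D :: "rat set" where "D \<equiv> Zloc p"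

lemma p_pos: "(of_nat p :: rat) > 0"
  using prime_gt_0_nat[OF prime_p] by simp

lemma ZlocI: "b \<noteq> 0 \<Longrightarrow> \<not> int p dvd b \<Longrightarrow> of_int a / of_int b \<in> D"
  unfolding Zloc_def by blast

lemma ZlocE:
  assumes "x \<in> D"
  obtains a b where "b \<noteq> 0" "\<not> int p dvd b" "x = of_int a / of_int b"
  using assms unfolding Zloc_def by blast

lemma Zloc_of_int [simp]: "of_int a \<in> D"
  using ZlocI[of 1 a] prime_gt_1_nat[OF prime_p] by simp

lemma Zloc_of_nat [simp]: "of_nat n \<in> D"
  using Zloc_of_int[of "int n"] by simp

lemma Zloc_0 [simp]: "0 \<in> D" and Zloc_1 [simp]: "1 \<in> D"
  using Zloc_of_int[of 0] Zloc_of_int[of 1] by simp_all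

lemma not_dvd_mult_denominators: "\<not> int p dvd b \<Longrightarrow> \<not> int p dvd d \<Longrightarrow> \<not> int p dvd b * d"
  using prime_p by (simp add: prime_dvd_mult_iff)

lemma Zloc_add [simp]:
  assumes "x \<in> D" "y \<in> D" shows "x + y \<in> D"
proof -
  obtain a b c d where "b \<noteq> 0" "\<not> int p dvd b" "x = of_int a / of_int b"
    "d \<noteq> 0" "\<not> int p dvd d" "y = of_int c / of_int d"
    using assms by (metis ZlocE)
  moreover from this have "x + y = of_int (a * d + c * b) / of_int (b * d)"
    by (simp add: field_simps)
  ultimately show ?thesis
    using ZlocI[of "b * d" "a * d + c * b"] not_dvd_mult_denominators by simp
qed

lemma Zloc_mult [simp]:
  assumes "x \<in> D" "y \<in> D" shows "x * y \<in> D"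
proof -
  obtain a b c d where "b \<noteq> 0" "\<not> int p dvd b" "x = of_int a / of_int b"
    "d \<noteq> 0" "\<not> int p dvd d" "y = of_int c / of_int d"
    using assms by (metis ZlocE)
  then show ?thesis
    using ZlocI[of "b * d" "a * c"] not_dvd_mult_denominators by simp
qed

lemma Zloc_uminus [simp]: "x \<in> D \<Longrightarrow> - x \<in> D"
  using Zloc_mult[of "-1" x] Zloc_of_int[of "-1"] by simp

lemma Zloc_diff [simp]: "x \<in> D \<Longrightarrow> y \<in> D \<Longrightarrow> x - y \<in> D"
  using Zloc_add[of x "- y"] by simp

lemma Zloc_power [simp]: "x \<in> D \<Longrightarrow> x ^ n \<in> D"
  by (induction n) simp_all

lemma inverse_p_notin_Zloc: "1 / of_nat p \<notin> D"
proof
  assume "1 / of_nat p \<in> D"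
  then obtain a b where "\<not> int p dvd b" "1 / (of_nat p :: rat) = of_int a / of_int b"
    by (metis ZlocE)
  then have "\<not> int p dvd b" "of_int b = (of_int (int p * a) :: rat)"
    using p_pos by (auto simp: field_simps)
  then show False by (metis dvd_triv_left of_int_eq_iff)
qed

text \<open>Units of \<open>D\<close> are described throughout as the \<open>x \<in> D\<close> with \<open>x / p \<notin> D\<close>.\<close>

lemma Zloc_inverse:
  assumes "x \<in> D" "x / of_nat p \<notin> D"
  shows "1 / x \<in> D"
proof -
  obtain a b where ab: "b \<noteq> 0" "\<not> int p dvd b" "x = of_int a / of_int b"
    using assms(1) by (metis ZlocE)
  have "\<not> int p dvd a"
  proof
    assume "int p dvd a"
    then obtain a' where "a = int p * a'" by blast
    then have "x / of_nat p = of_int a' / of_int b"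
      using ab p_pos by (simp add: field_simps)
    then show False using assms(2) ZlocI ab by metis
  qed
  then show ?thesis
    using ab ZlocI[of a b] by (cases "a = 0") auto
qed

lemma exists_int_congruent:
  assumes "s \<in> D" shows "\<exists>t :: int. (s - of_int t) / of_nat p \<in> D"
proof -
  obtain m n where mn: "n \<noteq> 0" "\<not> int p dvd n" "s = of_int m / of_int n"
    using assms by (metis ZlocE)
  have "coprime n (int p)"
    using mn(2) prime_p prime_imp_coprime[of "int p" n] by (simp add: coprime_commute)
  then obtain u v where uv: "u * n + v * int p = 1"
    using bezout_int[of n "int p"] by (auto simp: coprime_iff_gcd_eq_1)
  then have "of_int m = of_int m * (of_int u * of_int n + of_int v * (of_nat p :: rat))"
    by (metis mult.right_neutral of_int_add of_int_mult of_int_of_nat_eq)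
  then have "(s - of_int (m * u)) / of_nat p = of_int (m * v) / of_int n"
    using mn p_pos by (simp add: field_simps)
  then show ?thesis
    using ZlocI[of n "m * v"] mn(1,2) by (intro exI[of _ "m * u"]) simp
qed

lemma power_p_times_in_Zloc: "\<exists>E. of_nat p ^ E * c \<in> D"
proof -
  obtain a b where q: "quotient_of c = (a, b)" by fastforce
  then have c: "c = of_int a / of_int b" and b: "b \<noteq> 0"
    using quotient_of_div quotient_of_denom_pos by fastforce+
  have "\<not> is_unit (int p)"
    using prime_gt_1_nat[OF prime_p] by simp
  then obtain m where m: "b = int p ^ multiplicity (int p) b * m" "\<not> int p dvd m"
    using multiplicity_decompose'[OF b] by blast
  define k where "k = multiplicity (int p) b"
  have "m \<noteq> 0" using m(2) by auto
  have "of_nat p ^ k * c = of_int a / of_int m"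
    using p_pos \<open>m \<noteq> 0\<close> unfolding c k_def by (subst m(1)) simp
  then have "of_nat p ^ k * c \<in> D"
    using ZlocI[OF \<open>m \<noteq> 0\<close> m(2)] by simp
  then show ?thesis by blast
qed

lemma power_p_times_in_Zloc_mono:
  assumes "E \<le> E'" "of_nat p ^ E * c \<in> D"
  shows "of_nat p ^ E' * c \<in> D"
proof -
  have "of_nat p ^ E' * c = of_nat p ^ (E' - E) * (of_nat p ^ E * c)"
    using assms(1) by (simp add: power_add[symmetric] mult.assoc)
  then show ?thesis by (metis assms(2) Zloc_mult Zloc_power Zloc_of_nat)
qed

lemma power_p_times_list_in_Zloc: "\<exists>E. \<forall>c\<in>set cs. of_nat p ^ E * c \<in> D"
proof (induction cs)
  case (Cons c cs)
  then obtain E where "\<forall>c\<in>set cs. of_nat p ^ E * c \<in> D" by blast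
  moreover obtain E' where "of_nat p ^ E' * c \<in> D"
    using power_p_times_in_Zloc by blast
  ultimately have "\<forall>x\<in>set (c # cs). of_nat p ^ max E E' * x \<in> D"
    by (auto intro: power_p_times_in_Zloc_mono[rotated])
  then show ?case by blast
qed simp

end

locale odd_prime_localization = prime_localization +
  assumes odd_p: "odd p"
begin

lemma half_in_Zloc [simp]: "1 / 2 \<in> D"
proof -
  have "\<not> int p dvd 2"
  proof
    assume "int p dvd 2"
    then have "p dvd 2" by presburger
    then show False
      using prime_p odd_p prime_ge_2_nat[OF prime_p] by (auto dest: dvd_imp_le)
  qed
  then show ?thesis using ZlocI[of 2 1] by simp
qed

text \<open>Pigeonhole: the \<open>(p+1)/2\<close> residues \<open>x\<^sup>2\<close> and the \<open>(p+1)/2\<close> residues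
  \<open>t - y\<^sup>2\<close> (\<open>0 \<le> x, y \<le> (p-1)/2\<close>) cannot all be distinct modulo \<open>p\<close>.\<close>

lemma two_squares_mod_p: "\<exists>x y :: int. int p dvd x\<^sup>2 + y\<^sup>2 - t"
proof -
  define P where "P = int p"
  define h where "h = (P - 1) div 2"
  have P3: "P \<ge> 3" using prime_ge_2_nat[OF prime_p] odd_p unfolding P_def by presburger
  have h: "2 * h + 1 = P" "h \<ge> 0" unfolding h_def using odd_p P3 unfolding P_def by presburger+
  have "prime P" unfolding P_def using prime_p by simp
  have squares_distinct: "x = x'" if "x \<in> {0..h}" "x' \<in> {0..h}" "P dvd x\<^sup>2 - x'\<^sup>2" for x x'
  proof -
    have "x\<^sup>2 - x'\<^sup>2 = (x - x') * (x + x')" by (simp add: algebra_simps power2_eq_square)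
    then have "P dvd x - x' \<or> P dvd x + x'"
      using that(3) \<open>prime P\<close> by (simp add: prime_dvd_mult_iff)
    moreover have "\<bar>x - x'\<bar> < P" "0 \<le> x + x'" "x + x' < P" using that(1,2) h by auto
    ultimately show ?thesis
      using that(1,2) dvd_imp_le_int[of "x - x'" P] zdvd_imp_le[of P "x + x'"] by fastforce
  qed
  define f1 where "f1 x = x\<^sup>2 mod P" for x
  define f2 where "f2 y = (t - y\<^sup>2) mod P" for y
  have "inj_on f1 {0..h}" "inj_on f2 {0..h}"
    unfolding f1_def f2_def inj_on_def mod_eq_dvd_iff
    using squares_distinct by (auto simp: dvd_diff_commute)
  then have "card (f1 ` {0..h}) = h + 1" "card (f2 ` {0..h}) = h + 1"
    using h by (simp_all add: card_image)
  moreover have "f1 ` {0..h} \<union> f2 ` {0..h} \<subseteq> {0..<P}"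
    unfolding f1_def f2_def using P3 by auto
  then have "card (f1 ` {0..h} \<union> f2 ` {0..h}) \<le> nat P"
    using card_mono[of "{0..<P}"] by fastforce
  moreover have "card (f1 ` {0..h}) + card (f2 ` {0..h}) =
      card (f1 ` {0..h} \<union> f2 ` {0..h}) + card (f1 ` {0..h} \<inter> f2 ` {0..h})"
    by (rule card_Un_Int) auto
  ultimately have "card (f1 ` {0..h} \<inter> f2 ` {0..h}) \<noteq> 0"
    using h by linarith
  then have "f1 ` {0..h} \<inter> f2 ` {0..h} \<noteq> {}"
    by auto
  then obtain x y where "x\<^sup>2 mod P = (t - y\<^sup>2) mod P"
    unfolding f1_def f2_def by auto
  then have "P dvd x\<^sup>2 + y\<^sup>2 - t"
    by (simp add: mod_eq_dvd_iff algebra_simps)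
  then show ?thesis unfolding P_def by blast
qed

lemma three_squares_mod_p:
  assumes "s \<in> D"
  shows "\<exists>c d. c \<in> D \<and> d \<in> D \<and> (1 + c\<^sup>2 + d\<^sup>2 - s) / of_nat p \<in> D"
proof -
  obtain t where t: "(s - of_int t) / of_nat p \<in> D"
    using exists_int_congruent[OF assms] by blast
  obtain x y where "int p dvd x\<^sup>2 + y\<^sup>2 - (t - 1)"
    using two_squares_mod_p by blast
  then obtain k where "x\<^sup>2 + y\<^sup>2 - (t - 1) = int p * k"
    by (rule dvdE)
  then have "of_int (x\<^sup>2 + y\<^sup>2 - (t - 1)) = (of_int (int p * k) :: rat)"
    by (rule arg_cong)
  then have "of_int x ^ 2 + of_int y ^ 2 - (of_int t - 1) = (of_nat p * of_int k :: rat)"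
    by simp
  then have "(1 + (of_int x)\<^sup>2 + (of_int y)\<^sup>2 - s) / of_nat p = of_int k - (s - of_int t) / of_nat p"
    using p_pos by (simp add: field_simps)
  then show ?thesis using t by (intro exI[of _ "of_int x"] exI[of _ "of_int y"]) simp
qed

text \<open>Hensel's lemma for \<open>X\<^sup>2 + q\<close> at a unit root: correct \<open>b\<close> by \<open>p\<^sup>n\<^sup>+\<^sup>1 y\<close> with
  \<open>2 b y\<close> cancelling the error term.\<close>

lemma square_lift:
  assumes b: "b \<in> D" "b / of_nat p \<notin> D"
    and q: "(b\<^sup>2 + q) / of_nat p ^ Suc n \<in> D"
  shows "\<exists>b'. b' \<in> D \<and> b' / of_nat p \<notin> D \<and> (b'\<^sup>2 + q) / of_nat p ^ Suc (Suc n) \<in> D"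
proof -
  define e :: rat where "e = of_nat p ^ Suc n"
  define y where "y = - ((b\<^sup>2 + q) / e) * (1 / 2) * (1 / b)"
  have "b \<noteq> 0" "e \<noteq> 0" using b(2) p_pos unfolding e_def by auto
  have "y \<in> D"
    unfolding y_def using q[folded e_def] Zloc_inverse[OF b] by (intro Zloc_mult Zloc_uminus) simp_all
  define b' where "b' = b + e * y"
  have "b' \<in> D" unfolding b'_def e_def using b(1) \<open>y \<in> D\<close> by simp
  have "b'\<^sup>2 + q = e\<^sup>2 * y\<^sup>2"
    using \<open>b \<noteq> 0\<close> \<open>e \<noteq> 0\<close> unfolding b'_def y_def by (simp add: field_simps power2_eq_square)
  moreover have "e\<^sup>2 = of_nat p ^ n * of_nat p ^ Suc (Suc n)"
    unfolding e_def by (simp add: power2_eq_square flip: power_add)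
  ultimately have "(b'\<^sup>2 + q) / of_nat p ^ Suc (Suc n) = of_nat p ^ n * y\<^sup>2"
    using p_pos by simp
  then have "(b'\<^sup>2 + q) / of_nat p ^ Suc (Suc n) \<in> D"
    using \<open>y \<in> D\<close> by simp
  moreover have "b' / of_nat p \<notin> D"
  proof
    assume "b' / of_nat p \<in> D"
    moreover have "b / of_nat p = b' / of_nat p - of_nat p ^ n * y"
      using p_pos unfolding b'_def e_def by (simp add: field_simps)
    ultimately show False using b(2) \<open>y \<in> D\<close> by simp
  qed
  ultimately show ?thesis using \<open>b' \<in> D\<close> by blast
qed

lemma sum_three_squares_approx:
  assumes "s \<in> D"
  shows "\<exists>b c d. b \<in> D \<and> b / of_nat p \<notin> D \<and> c \<in> D \<and> d \<in> D \<and>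
    (b\<^sup>2 + c\<^sup>2 + d\<^sup>2 - s) / of_nat p ^ Suc n \<in> D"
proof (induction n)
  case 0
  obtain c d where "c \<in> D" "d \<in> D" "(1 + c\<^sup>2 + d\<^sup>2 - s) / of_nat p \<in> D"
    using three_squares_mod_p[OF assms] by blast
  then show ?case
    using inverse_p_notin_Zloc by (intro exI[of _ 1] exI[of _ c] exI[of _ d]) simp
next
  case (Suc n)
  have regroup: "x\<^sup>2 + c\<^sup>2 + d\<^sup>2 - s = x\<^sup>2 + (c\<^sup>2 + d\<^sup>2 - s)" for x c d :: rat
    by simp
  from Suc.IH obtain b c d where bcd: "b \<in> D" "b / of_nat p \<notin> D" "c \<in> D" "d \<in> D"
    "(b\<^sup>2 + c\<^sup>2 + d\<^sup>2 - s) / of_nat p ^ Suc n \<in> D"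
    by blast
  then have "(b\<^sup>2 + (c\<^sup>2 + d\<^sup>2 - s)) / of_nat p ^ Suc n \<in> D"
    by (simp only: regroup)
  from square_lift[OF bcd(1,2) this] obtain b' where b': "b' \<in> D" "b' / of_nat p \<notin> D"
    "(b'\<^sup>2 + (c\<^sup>2 + d\<^sup>2 - s)) / of_nat p ^ Suc (Suc n) \<in> D"
    by blast
  from b'(3) have "(b'\<^sup>2 + c\<^sup>2 + d\<^sup>2 - s) / of_nat p ^ Suc (Suc n) \<in> D"
    by (simp only: regroup)
  with bcd(3,4) b'(1,2) show ?case
    by blast
qed

end

text \<open>If \<open>u\<^sup>2 = -s\<close> in some \<open>\<rat>\<close>-algebra, Horner evaluation of the coefficient list \<open>cs\<close>
  at \<open>a + u\<close> gives \<open>F + S u\<close>, where \<open>(F, S) = quad_horner s a cs\<close>.\<close>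

definition quad_step :: "rat \<Rightarrow> rat \<Rightarrow> rat \<Rightarrow> rat \<times> rat \<Rightarrow> rat \<times> rat" where
  "quad_step s a c FS = (c + fst FS * a - s * snd FS, fst FS + snd FS * a)"

definition quad_horner :: "rat \<Rightarrow> rat \<Rightarrow> rat list \<Rightarrow> rat \<times> rat" where
  "quad_horner s a cs = foldr (quad_step s a) cs (0, 0)"

lemma quad_horner_Nil [simp]: "quad_horner s a [] = (0, 0)"
  by (simp add: quad_horner_def)

lemma quad_horner_Cons:
  "quad_horner s a (c # cs) = quad_step s a c (quad_horner s a cs)"
  by (simp add: quad_horner_def)

lemma qeval_Quat:
  "qeval f (Quat a x y z) =
    (case quad_horner (x\<^sup>2 + y\<^sup>2 + z\<^sup>2) a (coeffs f) of (F, S) \<Rightarrow> Quat F (S * x) (S * y) (S * z))"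
proof -
  have "foldr (\<lambda>c acc. qadd (qscal c) (qmul acc (Quat a x y z))) cs (Quat 0 0 0 0) =
      (case quad_horner (x\<^sup>2 + y\<^sup>2 + z\<^sup>2) a cs of (F, S) \<Rightarrow> Quat F (S * x) (S * y) (S * z))" for cs
    by (induction cs)
      (auto simp: quad_horner_Cons quad_step_def qscal_def power2_eq_square algebra_simps
        split: prod.splits)
  then show ?thesis unfolding qeval_def .
qed

definition mk2 :: "rat \<Rightarrow> rat \<Rightarrow> rat \<Rightarrow> rat \<Rightarrow> rat^2^2" where
  "mk2 a b c d = (\<chi> i j. if i = 1 then (if j = 1 then a else b) else (if j = 1 then c else d))"

lemma mk2_nth [simp]:
  "mk2 a b c d $ 1 $ 1 = a" "mk2 a b c d $ 1 $ 2 = b" "mk2 a b c d $ 2 $ 1 = c" "mk2 a b c d $ 2 $ 2 = d"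
  unfolding mk2_def by auto

lemma mk2_entries: "M = mk2 (M $ 1 $ 1) (M $ 1 $ 2) (M $ 2 $ 1) (M $ 2 $ 2)"
  by (simp add: vec_eq_iff forall_2)

lemma mk2_eq_iff: "mk2 a b c d = mk2 a' b' c' d' \<longleftrightarrow> a = a' \<and> b = b' \<and> c = c' \<and> d = d'"
  by (metis mk2_nth)

lemma mk2_add: "mk2 a b c d + mk2 a' b' c' d' = mk2 (a + a') (b + b') (c + c') (d + d')"
  by (simp add: vec_eq_iff forall_2)

lemma mk2_mult:
  "mk2 a b c d ** mk2 a' b' c' d' = mk2 (a*a' + b*c') (a*b' + b*d') (c*a' + d*c') (c*b' + d*d')"
  by (simp add: matrix_matrix_mult_def vec_eq_iff forall_2 sum_2)

lemma mat_eq_mk2: "mat c = mk2 c 0 0 c"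
  by (simp add: vec_eq_iff forall_2 mat_def)

text \<open>The traceless part \<open>u\<close> of \<open>mk2 (a + z) x y (a - z)\<close> satisfies \<open>u\<^sup>2 = (z\<^sup>2 + x y) I\<close>.\<close>

lemma meval_mk2:
  "meval f (mk2 (a + z) x y (a - z)) =
    (case quad_horner (- (z\<^sup>2 + x * y)) a (coeffs f) of
      (F, S) \<Rightarrow> mk2 (F + S * z) (S * x) (S * y) (F - S * z))"
proof -
  have "foldr (\<lambda>c acc. mat c + acc ** mk2 (a + z) x y (a - z)) cs (mat 0) =
      (case quad_horner (- (z\<^sup>2 + x * y)) a cs of
        (F, S) \<Rightarrow> mk2 (F + S * z) (S * x) (S * y) (F - S * z))" for cs
    by (induction cs)
      (auto simp: quad_horner_Cons quad_step_def mat_eq_mk2 mk2_mult mk2_add mk2_eq_iff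
        power2_eq_square algebra_simps split: prod.splits)
  then show ?thesis unfolding meval_def .
qed

lemma Quat_in_quat_order:
  "Quat a b c d \<in> quat_order p \<longleftrightarrow> a \<in> Zloc p \<and> b \<in> Zloc p \<and> c \<in> Zloc p \<and> d \<in> Zloc p"
  unfolding quat_order_def by auto

lemma mk2_in_M2: "mk2 a b c d \<in> M2 p \<longleftrightarrow> a \<in> Zloc p \<and> b \<in> Zloc p \<and> c \<in> Zloc p \<and> d \<in> Zloc p"
  unfolding M2_def by (simp add: forall_2)

context prime_localization
begin

lemma quad_horner_scaled_in_Zloc:
  assumes "\<forall>c\<in>set cs. K * c \<in> D" "a \<in> D" "s \<in> D"
  shows "K * fst (quad_horner s a cs) \<in> D \<and> K * snd (quad_horner s a cs) \<in> D"
  using assms(1)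
proof (induction cs)
  case (Cons c cs)
  obtain F S where FS: "quad_horner s a cs = (F, S)" by fastforce
  with Cons have "K * c \<in> D" "K * F \<in> D" "K * S \<in> D" by auto
  moreover have "K * (c + F * a - s * S) = K * c + (K * F) * a - s * (K * S)"
    "K * (F + S * a) = K * F + (K * S) * a"
    by (simp_all add: algebra_simps)
  ultimately show ?case
    using assms(2,3) by (simp add: quad_horner_Cons quad_step_def FS)
qed simp

lemma quad_horner_congruent:
  assumes K: "K \<noteq> 0" "\<forall>c\<in>set cs. K * c \<in> D" and "a \<in> D" "s \<in> D" "t \<in> D"
    and ts: "(t - s) / K \<in> D"
  shows "fst (quad_horner t a cs) - fst (quad_horner s a cs) \<in> D \<and>
    snd (quad_horner t a cs) - snd (quad_horner s a cs) \<in> D"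
  using K(2)
proof (induction cs)
  case (Cons c cs)
  obtain F S where FS: "quad_horner s a cs = (F, S)" by fastforce
  obtain F' S' where FS': "quad_horner t a cs = (F', S')" by fastforce
  from Cons FS FS' have IH: "F' - F \<in> D" "S' - S \<in> D" by auto
  have "K * S \<in> D"
    using quad_horner_scaled_in_Zloc[of cs K a s] Cons.prems \<open>a \<in> D\<close> \<open>s \<in> D\<close> FS by simp
  have differences: "(c + F' * a - t * S') - (c + F * a - s * S) =
      (F' - F) * a - t * (S' - S) - ((t - s) / K) * (K * S)"
    "(F' + S' * a) - (F + S * a) = (F' - F) + (S' - S) * a"
    using K(1) by (simp_all add: field_simps)
  show ?case
    unfolding quad_horner_Cons quad_step_def FS FS' fst_conv snd_conv differences
    using Zloc_mult[OF ts \<open>K * S \<in> D\<close>] IH \<open>a \<in> D\<close> \<open>t \<in> D\<close> by simp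
qed simp

definition IntQ_quad :: "rat poly set" where
  "IntQ_quad = {f. \<forall>a\<in>D. \<forall>s\<in>D. quad_horner s a (coeffs f) \<in> D \<times> D}"

lemma IntQ_M2_subset_IntQ_quad: "IntQ_M2 p \<subseteq> IntQ_quad"
proof (unfold IntQ_quad_def, intro subsetI CollectI ballI)
  fix f a s assume f: "f \<in> IntQ_M2 p" and "a \<in> D" "s \<in> D"
  obtain F S where FS: "quad_horner s a (coeffs f) = (F, S)" by fastforce
  have "mk2 (a + 0) 1 (- s) (a - 0) \<in> M2 p"
    using \<open>a \<in> D\<close> \<open>s \<in> D\<close> by (simp add: mk2_in_M2)
  then have "meval f (mk2 (a + 0) 1 (- s) (a - 0)) \<in> M2 p"
    using f unfolding IntQ_M2_def by blast
  then show "quad_horner s a (coeffs f) \<in> D \<times> D"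
    unfolding meval_mk2 by (simp add: FS mk2_in_M2)
qed

lemma IntQ_quad_subset_IntQ_quat: "IntQ_quad \<subseteq> IntQ_quat p"
proof (intro subsetI, unfold IntQ_quat_def, intro CollectI ballI)
  fix f q assume f: "f \<in> IntQ_quad" and "q \<in> quat_order p"
  then obtain a x y z where q: "q = Quat a x y z" "a \<in> D" "x \<in> D" "y \<in> D" "z \<in> D"
    unfolding quat_order_def by blast
  then have "quad_horner (x\<^sup>2 + y\<^sup>2 + z\<^sup>2) a (coeffs f) \<in> D \<times> D"
    using f unfolding IntQ_quad_def by simp
  then show "qeval f q \<in> quat_order p"
    using q by (auto simp: qeval_Quat Quat_in_quat_order split: prod.splits)
qed

end

context odd_prime_localization
begin

lemma IntQ_quad_subset_IntQ_M2: "IntQ_quad \<subseteq> IntQ_M2 p"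
proof (intro subsetI, unfold IntQ_M2_def, intro CollectI ballI)
  fix f M assume f: "f \<in> IntQ_quad" and "M \<in> M2 p"
  define a where "a = (M $ 1 $ 1 + M $ 2 $ 2) / 2"
  define z where "z = (M $ 1 $ 1 - M $ 2 $ 2) / 2"
  define x where "x = M $ 1 $ 2"
  define y where "y = M $ 2 $ 1"
  have "M $ i $ j \<in> D" for i j using \<open>M \<in> M2 p\<close> unfolding M2_def by blast
  then have "a \<in> D" "z \<in> D" "x \<in> D" "y \<in> D"
    unfolding a_def z_def x_def y_def using Zloc_mult[OF _ half_in_Zloc] by simp_all
  moreover from this have "quad_horner (- (z\<^sup>2 + x * y)) a (coeffs f) \<in> D \<times> D"
    using f unfolding IntQ_quad_def by simp
  ultimately have "meval f (mk2 (a + z) x y (a - z)) \<in> M2 p"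
    by (auto simp: meval_mk2 mk2_in_M2 split: prod.splits)
  moreover have "M = mk2 (a + z) x y (a - z)"
    by (subst mk2_entries) (simp add: a_def z_def x_def y_def mk2_eq_iff field_simps)
  ultimately show "meval f M \<in> M2 p" by simp
qed

text \<open>Given \<open>a, s \<in> D\<close>, approximate \<open>s\<close> by a sum of three squares \<open>b\<^sup>2 + c\<^sup>2 + d\<^sup>2\<close> with
  \<open>b\<close> a unit, to \<open>p\<close>-adic precision beyond the denominators of \<open>f\<close>; evaluating \<open>f\<close> at
  \<open>a + b i + c j + d k\<close> then controls \<open>quad_horner s a (coeffs f)\<close>.\<close>

lemma IntQ_quat_subset_IntQ_quad: "IntQ_quat p \<subseteq> IntQ_quad"
proof (intro subsetI, unfold IntQ_quad_def, intro CollectI ballI)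
  fix f a s assume f: "f \<in> IntQ_quat p" and "a \<in> D" "s \<in> D"
  obtain E where E: "\<forall>c\<in>set (coeffs f). of_nat p ^ E * c \<in> D"
    using power_p_times_list_in_Zloc by blast
  define K :: rat where "K = of_nat p ^ Suc E"
  have K: "K \<noteq> 0" "\<forall>c\<in>set (coeffs f). K * c \<in> D"
    using p_pos E power_p_times_in_Zloc_mono[of E "Suc E"] unfolding K_def by auto
  obtain b c d where bcd: "b \<in> D" "b / of_nat p \<notin> D" "c \<in> D" "d \<in> D"
    "(b\<^sup>2 + c\<^sup>2 + d\<^sup>2 - s) / K \<in> D"
    using sum_three_squares_approx[OF \<open>s \<in> D\<close>, of E] unfolding K_def by blast
  define t where "t = b\<^sup>2 + c\<^sup>2 + d\<^sup>2"
  obtain F S where FS: "quad_horner s a (coeffs f) = (F, S)" by fastforce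
  obtain F' S' where FS': "quad_horner t a (coeffs f) = (F', S')" by fastforce
  have "Quat a b c d \<in> quat_order p"
    using \<open>a \<in> D\<close> bcd by (simp add: Quat_in_quat_order)
  then have "qeval f (Quat a b c d) \<in> quat_order p"
    using f unfolding IntQ_quat_def by blast
  then have "F' \<in> D" "S' * b \<in> D"
    using FS' unfolding qeval_Quat t_def by (simp_all add: Quat_in_quat_order)
  moreover have "b \<noteq> 0" using bcd(2) by auto
  ultimately have "S' \<in> D"
    using Zloc_mult[OF \<open>S' * b \<in> D\<close> Zloc_inverse[OF bcd(1,2)]] by simp
  moreover have "F' - F \<in> D" "S' - S \<in> D"
    using quad_horner_congruent[OF K \<open>a \<in> D\<close> \<open>s \<in> D\<close>, of t] bcd FS FS'
    unfolding t_def by simp_all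
  ultimately have "F \<in> D" "S \<in> D"
    using \<open>F' \<in> D\<close> Zloc_diff[of F' "F' - F"] Zloc_diff[of S' "S' - S"] by simp_all
  then show "quad_horner s a (coeffs f) \<in> D \<times> D" by (simp add: FS)
qed

lemma IntQ_quat_eq_IntQ_M2: "IntQ_quat p = IntQ_M2 p"
  using IntQ_quat_subset_IntQ_quad IntQ_quad_subset_IntQ_quat
    IntQ_M2_subset_IntQ_quad IntQ_quad_subset_IntQ_M2 by blast

end

fun quat_norm :: "quat \<Rightarrow> rat" where
  "quat_norm (Quat a b c d) = a\<^sup>2 + b\<^sup>2 + c\<^sup>2 + d\<^sup>2"

lemma quat_norm_qmul: "quat_norm (qmul x y) = quat_norm x * quat_norm y"
  by (cases x; cases y) (simp add: power2_eq_square algebra_simps)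

lemma quat_norm_eq_0_iff: "quat_norm x = 0 \<longleftrightarrow> x = Quat 0 0 0 0"
  by (cases x) (simp add: add_nonneg_eq_0_iff)

lemma qmul_eq_0_iff: "qmul x y = Quat 0 0 0 0 \<longleftrightarrow> x = Quat 0 0 0 0 \<or> y = Quat 0 0 0 0"
  by (metis quat_norm_eq_0_iff quat_norm_qmul mult_eq_0_iff)

context prime_localization
begin

lemma qmul_in_quat_order: "x \<in> quat_order p \<Longrightarrow> y \<in> quat_order p \<Longrightarrow> qmul x y \<in> quat_order p"
  by (cases x; cases y) (simp add: Quat_in_quat_order)

lemma no_ring_iso_quat_order_M2:
  "\<not> (\<exists>\<phi> :: quat \<Rightarrow> rat^2^2. bij_betw \<phi> (quat_order p) (M2 p) \<and>
      (\<forall>x \<in> quat_order p. \<forall>y \<in> quat_order p.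
        \<phi> (qadd x y) = \<phi> x + \<phi> y \<and> \<phi> (qmul x y) = \<phi> x ** \<phi> y))"
proof
  assume "\<exists>\<phi> :: quat \<Rightarrow> rat^2^2. bij_betw \<phi> (quat_order p) (M2 p) \<and>
      (\<forall>x \<in> quat_order p. \<forall>y \<in> quat_order p.
        \<phi> (qadd x y) = \<phi> x + \<phi> y \<and> \<phi> (qmul x y) = \<phi> x ** \<phi> y)"
  then obtain \<phi> :: "quat \<Rightarrow> rat^2^2" where bij: "bij_betw \<phi> (quat_order p) (M2 p)"
    and hom: "\<forall>x \<in> quat_order p. \<forall>y \<in> quat_order p.
      \<phi> (qadd x y) = \<phi> x + \<phi> y \<and> \<phi> (qmul x y) = \<phi> x ** \<phi> y"
    by blast
  define Z where "Z = Quat 0 0 0 0"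
  have Z: "Z \<in> quat_order p" unfolding Z_def by (simp add: Quat_in_quat_order)
  have "\<phi> Z + \<phi> Z = \<phi> Z"
    using hom[rule_format, OF Z Z] by (simp add: Z_def)
  then have \<phi>Z: "\<phi> Z = mk2 0 0 0 0"
    by (simp add: vec_eq_iff forall_2)
  have "mk2 1 0 0 0 \<in> M2 p" "mk2 0 0 0 1 \<in> M2 p"
    by (simp_all add: mk2_in_M2)
  then obtain x y where x: "x \<in> quat_order p" "\<phi> x = mk2 1 0 0 0"
    and y: "y \<in> quat_order p" "\<phi> y = mk2 0 0 0 1"
    using bij unfolding bij_betw_def by (metis imageE)
  then have "\<phi> (qmul x y) = \<phi> Z"
    using hom[rule_format, OF x(1) y(1)] by (simp add: \<phi>Z mk2_mult)
  then have "qmul x y = Z"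
    using bij qmul_in_quat_order[OF x(1) y(1)] Z unfolding bij_betw_def inj_on_def by blast
  then show False
    using x(2) y(2) \<phi>Z unfolding Z_def qmul_eq_0_iff by (auto simp: mk2_eq_iff)
qed

end

theorem mainTheorem13:
  fixes p :: nat
  assumes "prime p" and "odd p"
  shows "IntQ_quat p = IntQ_M2 p \<and>
    \<not> (\<exists>\<phi> :: quat \<Rightarrow> rat^2^2.
          bij_betw \<phi> (quat_order p) (M2 p) \<and>
          (\<forall>x \<in> quat_order p. \<forall>y \<in> quat_order p.
              \<phi> (qadd x y) = \<phi> x + \<phi> y \<and> \<phi> (qmul x y) = \<phi> x ** \<phi> y) \<and>
          \<phi> qone = mat 1)"
proof -
  interpret odd_prime_localization p
    using assms by unfold_locales
  show ?thesis
    using IntQ_quat_eq_IntQ_M2 no_ring_iso_quat_order_M2 by blast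
qed

end
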